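(* Let $a, b \in \mathbb Z_g$ and let $1 \leq i < j \leq k$. Suppose that $\vec \theta \in \mathbb R^d$ and $\epsilon > 0$ have the property that for any pair of vectors $\vec x, \vec y \in (\mathbb Z_g)^k$, there are $z \in \mathbb Z$ and $\epsilon_1$ with $|\epsilon_1| < \epsilon$ such that $\vec \theta \cdot Z(\vec x) - \vec \theta \cdot Z(\vec y) = 2 \pi z + \epsilon_1$. Then there exists $\epsilon_2$ with $|\epsilon_2| < 2 \epsilon$ such that \[ \theta_{\{i,j\},a} + \theta_{\{i,j\},b} \equiv \theta_{\{i,j\},a+b} + \epsilon_2 \pmod{2 \pi},\] where the undefined value $\theta_{\{i,j\},0}$ is understood to be $0$.
   Context: Let $g\ge 2$, $k\ge 2$ be integers, $\mathbb Z_g$ the integers mod $g$, and $d=\binom{k}{2}(g-1)$. Index the coordinates of $\mathbb R^d$ by pairs $(\{i,j\},a)$ with $1\le i<j\le k$ and $a\in\mathbb Z_g\setminus\{0\}$. Define $Z:(\mathbb Z_g)^k\to\mathbb R^d$ by $[Z(\vec x)]_{\{i,j\},a}=1-1/g$ if $x_i-x_j=a$ and $-1/g$ otherwise. *)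

theory Defs
  imports Complex_Main
begin

(* Coordinate ({i,j},a) of Z(x), for 1 <= i < j <= k and a in {1..g-1}.
   Elements of Z_g are represented by naturals in {0..<g}; x is a function on indices 1..k. *)
definition Zcoord :: "nat \<Rightarrow> (nat \<Rightarrow> nat) \<Rightarrow> nat \<Rightarrow> nat \<Rightarrow> nat \<Rightarrow> real" where
  "Zcoord g x i j a =
     (if (int (x i) - int (x j)) mod int g = int a then 1 - 1 / real g else - 1 / real g)"

definition dotZ :: "nat \<Rightarrow> nat \<Rightarrow> (nat \<Rightarrow> nat \<Rightarrow> nat \<Rightarrow> real) \<Rightarrow> (nat \<Rightarrow> nat) \<Rightarrow> real" where
  "dotZ g k \<theta> x = (\<Sum>i\<in>{1..k}. \<Sum>j\<in>{i<..k}. \<Sum>a\<in>{1..<g}. \<theta> i j a * Zcoord g x i j a)"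

definition theta0 :: "nat \<Rightarrow> (nat \<Rightarrow> nat \<Rightarrow> nat \<Rightarrow> real) \<Rightarrow> nat \<Rightarrow> nat \<Rightarrow> nat \<Rightarrow> real" where
  "theta0 g \<theta> i j a = (if a mod g = 0 then 0 else \<theta> i j (a mod g))"

end

theory Submission
  imports Defs
begin

text \<open>Take the four vectors that are \<open>0\<close> outside positions \<open>i, j\<close>, have \<open>a\<close> or \<open>0\<close>
  at \<open>i\<close> and \<open>-b\<close> or \<open>0\<close> at \<open>j\<close>. The \<open>{p,q}\<close> block of \<open>\<theta> \<cdot> Z(x)\<close> is \<open>\<theta>_{{p,q},x_p-x_q}\<close>
  minus \<open>(1/g) \<Sum>\<^sub>c \<theta>_{{p,q},c}\<close>, and it depends only on \<open>x_p, x_q\<close>; hence in the mixed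
  second difference over the four vectors every block but \<open>{i,j}\<close> cancels, leaving
  \<open>\<theta>_{a+b} - \<theta>_a - \<theta>_b + \<theta>_0\<close>. That second difference is a sum of two differences covered
  by the hypothesis, so it lies within \<open>2\<epsilon>\<close> of a multiple of \<open>2\<pi>\<close>.\<close>

definition pair_term :: "nat \<Rightarrow> (nat \<Rightarrow> nat \<Rightarrow> nat \<Rightarrow> real) \<Rightarrow> (nat \<Rightarrow> nat) \<Rightarrow> nat \<Rightarrow> nat \<Rightarrow> real" where
  "pair_term g \<theta> x p q = (\<Sum>c\<in>{1..<g}. \<theta> p q c * Zcoord g x p q c)"

definition pair_config :: "nat \<Rightarrow> nat \<Rightarrow> nat \<Rightarrow> nat \<Rightarrow> nat \<Rightarrow> nat" where
  "pair_config i j s u l = (if l = i then s else if l = j then u else 0)"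

lemma dotZ_eq_sum_pair_term:
  "dotZ g k \<theta> x = (\<Sum>p\<in>{1..k}. \<Sum>q\<in>{p<..k}. pair_term g \<theta> x p q)"
  by (simp add: dotZ_def pair_term_def)

lemma pair_term_cong:
  "x p = y p \<Longrightarrow> x q = y q \<Longrightarrow> pair_term g \<theta> x p q = pair_term g \<theta> y p q"
  by (simp add: pair_term_def Zcoord_def)

lemma pair_term_eq:
  assumes "g \<ge> 2"
  shows "pair_term g \<theta> x p q
       = theta0 g \<theta> p q (nat ((int (x p) - int (x q)) mod int g))
         - (\<Sum>c\<in>{1..<g}. \<theta> p q c) / real g"
proof -
  define m where "m = nat ((int (x p) - int (x q)) mod int g)"
  have "m < g"
    using assms unfolding m_def by (simp add: nat_less_iff)
  have diff_eq: "((int (x p) - int (x q)) mod int g = int c) = (c = m)" for c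
    unfolding m_def using assms by auto
  have "pair_term g \<theta> x p q
      = (\<Sum>c\<in>{1..<g}. (if c = m then \<theta> p q c else 0) - \<theta> p q c / real g)"
    unfolding pair_term_def
    by (rule sum.cong) (auto simp: Zcoord_def diff_eq algebra_simps)
  also have "\<dots> = (\<Sum>c\<in>{1..<g}. if c = m then \<theta> p q c else 0) - (\<Sum>c\<in>{1..<g}. \<theta> p q c) / real g"
    by (simp add: sum_subtractf sum_divide_distrib)
  also have "(\<Sum>c\<in>{1..<g}. if c = m then \<theta> p q c else 0) = theta0 g \<theta> p q m"
    using \<open>m < g\<close> by (auto simp: theta0_def)
  finally show ?thesis
    unfolding m_def .
qed

lemma sum_pairs_eq_single:
  fixes h :: "nat \<Rightarrow> nat \<Rightarrow> 'a::comm_monoid_add"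
  assumes "1 \<le> i" "i < j" "j \<le> k"
    and "\<And>p q. p \<in> {1..k} \<Longrightarrow> q \<in> {p<..k} \<Longrightarrow> (p, q) \<noteq> (i, j) \<Longrightarrow> h p q = 0"
  shows "(\<Sum>p\<in>{1..k}. \<Sum>q\<in>{p<..k}. h p q) = h i j"
proof -
  have "(\<Sum>p\<in>{1..k}. \<Sum>q\<in>{p<..k}. h p q)
      = (\<Sum>q\<in>{i<..k}. h i q) + (\<Sum>p\<in>{1..k} - {i}. \<Sum>q\<in>{p<..k}. h p q)"
    by (rule sum.remove) (use assms in auto)
  also have "(\<Sum>p\<in>{1..k} - {i}. \<Sum>q\<in>{p<..k}. h p q) = 0"
    using assms(4) by (auto intro!: sum.neutral)
  also have "(\<Sum>q\<in>{i<..k}. h i q) = h i j + (\<Sum>q\<in>{i<..k} - {j}. h i q)"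
    by (rule sum.remove) (use assms in auto)
  also have "(\<Sum>q\<in>{i<..k} - {j}. h i q) = 0"
    using assms by (auto intro!: sum.neutral)
  finally show ?thesis
    by simp
qed

lemma dotZ_mixed_difference:
  assumes "1 \<le> i" "i < j" "j \<le> k"
  shows "dotZ g k \<theta> (pair_config i j s u) - dotZ g k \<theta> (pair_config i j s u')
       - dotZ g k \<theta> (pair_config i j s' u) + dotZ g k \<theta> (pair_config i j s' u')
       = pair_term g \<theta> (pair_config i j s u) i j - pair_term g \<theta> (pair_config i j s u') i j
       - pair_term g \<theta> (pair_config i j s' u) i j + pair_term g \<theta> (pair_config i j s' u') i j"
    (is "?lhs = _")
proof -
  let ?D = "\<lambda>p q. pair_term g \<theta> (pair_config i j s u) p q - pair_term g \<theta> (pair_config i j s u') p q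
       - pair_term g \<theta> (pair_config i j s' u) p q + pair_term g \<theta> (pair_config i j s' u') p q"
  have "?lhs = (\<Sum>p\<in>{1..k}. \<Sum>q\<in>{p<..k}. ?D p q)"
    unfolding dotZ_eq_sum_pair_term
    by (simp only: sum_subtractf[symmetric] sum.distrib[symmetric])
  also have "\<dots> = ?D i j"
  proof (rule sum_pairs_eq_single[OF assms])
    fix p q
    assume "p \<in> {1..k}" "q \<in> {p<..k}" "(p, q) \<noteq> (i, j)"
    then consider "j \<noteq> p" "j \<noteq> q" | "i \<noteq> p" "i \<noteq> q"
      using assms(2) by fastforce
    then show "?D p q = 0"
    proof cases
      case 1
      then have "pair_term g \<theta> (pair_config i j s u) p q = pair_term g \<theta> (pair_config i j s u') p q"
        "pair_term g \<theta> (pair_config i j s' u) p q = pair_term g \<theta> (pair_config i j s' u') p q"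
        by (auto intro!: pair_term_cong simp: pair_config_def)
      then show ?thesis
        by simp
    next
      case 2
      then have "pair_term g \<theta> (pair_config i j s u) p q = pair_term g \<theta> (pair_config i j s' u) p q"
        "pair_term g \<theta> (pair_config i j s u') p q = pair_term g \<theta> (pair_config i j s' u') p q"
        by (auto intro!: pair_term_cong simp: pair_config_def)
      then show ?thesis
        by simp
    qed
  qed
  finally show ?thesis .
qed

lemma pair_term_pair_config:
  assumes "g \<ge> 2" "i \<noteq> j"
  shows "pair_term g \<theta> (pair_config i j s u) i j
       = theta0 g \<theta> i j (nat ((int s - int u) mod int g)) - (\<Sum>c\<in>{1..<g}. \<theta> i j c) / real g"
  using assms by (simp add: pair_term_eq pair_config_def)

lemma nat_diff_neg_mod:
  assumes "b < g"
  shows "nat ((int a - int ((g - b) mod g)) mod int g) = (a + b) mod g"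
proof (cases "b = 0")
  case True
  then show ?thesis
    by (simp add: nat_mod_as_int)
next
  case False
  with assms have "int a - int ((g - b) mod g) = int (a + b) - int g"
    by simp
  then show ?thesis
    by (metis minus_mod_self2 nat_int zmod_int)
qed

lemma dotZ_mixed_difference_theta0:
  assumes "g \<ge> 2" "a < g" "b < g" "1 \<le> i" "i < j" "j \<le> k"
  defines "t \<equiv> (g - b) mod g"
  shows "dotZ g k \<theta> (pair_config i j a t) - dotZ g k \<theta> (pair_config i j a 0)
       - dotZ g k \<theta> (pair_config i j 0 t) + dotZ g k \<theta> (pair_config i j 0 0)
       = theta0 g \<theta> i j ((a + b) mod g) - theta0 g \<theta> i j a - theta0 g \<theta> i j b"
proof -
  have "i \<noteq> j"
    using assms(5) by simp
  moreover have "nat ((int 0 - int t) mod int g) = b"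
    using nat_diff_neg_mod[OF assms(3), of 0] assms(3) unfolding t_def by simp
  ultimately show ?thesis
    using assms(1,2,3)
    by (simp add: dotZ_mixed_difference[OF assms(4-6)] pair_term_pair_config
        nat_diff_neg_mod t_def theta0_def)
qed

theorem lemma2p1:
  fixes g k i j a b :: nat and \<theta> :: "nat \<Rightarrow> nat \<Rightarrow> nat \<Rightarrow> real" and \<epsilon> :: real
  assumes "g \<ge> 2" and "k \<ge> 2"
    and "a < g" and "b < g"
    and "1 \<le> i" and "i < j" and "j \<le> k"
    and "\<epsilon> > 0"
    and "\<forall>x y. (\<forall>l\<in>{1..k}. x l < g) \<and> (\<forall>l\<in>{1..k}. y l < g) \<longrightarrow>
           (\<exists>z::int. \<exists>\<epsilon>1. \<bar>\<epsilon>1\<bar> < \<epsilon> \<and>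
              dotZ g k \<theta> x - dotZ g k \<theta> y = 2 * pi * real_of_int z + \<epsilon>1)"
  shows "\<exists>\<epsilon>2. \<bar>\<epsilon>2\<bar> < 2 * \<epsilon> \<and> (\<exists>z::int.
           theta0 g \<theta> i j a + theta0 g \<theta> i j b
             = theta0 g \<theta> i j ((a + b) mod g) + \<epsilon>2 + 2 * pi * real_of_int z)"
proof -
  define t where "t = (g - b) mod g"
  have config_range: "\<forall>l\<in>{1..k}. pair_config i j s u l < g" if "s < g" "u < g" for s u
    using that assms(1) by (auto simp: pair_config_def)
  have "t < g" "0 < g"
    using assms(1) by (auto simp: t_def)
  obtain z1 e1 where "\<bar>e1\<bar> < \<epsilon>" and z1:
    "dotZ g k \<theta> (pair_config i j a t) - dotZ g k \<theta> (pair_config i j a 0) = 2 * pi * real_of_int z1 + e1"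
    using assms(9) config_range assms(3) \<open>t < g\<close> \<open>0 < g\<close> by blast
  obtain z2 e2 where "\<bar>e2\<bar> < \<epsilon>" and z2:
    "dotZ g k \<theta> (pair_config i j 0 0) - dotZ g k \<theta> (pair_config i j 0 t) = 2 * pi * real_of_int z2 + e2"
    using assms(9) config_range \<open>t < g\<close> \<open>0 < g\<close> by blast
  have "\<bar>- (e1 + e2)\<bar> < 2 * \<epsilon>"
    using \<open>\<bar>e1\<bar> < \<epsilon>\<close> \<open>\<bar>e2\<bar> < \<epsilon>\<close> by linarith
  moreover have "theta0 g \<theta> i j a + theta0 g \<theta> i j b
      = theta0 g \<theta> i j ((a + b) mod g) + - (e1 + e2) + 2 * pi * real_of_int (- (z1 + z2))"
    using dotZ_mixed_difference_theta0[OF assms(1,3,4,5,6,7), of \<theta>] z1 z2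
    unfolding t_def by (simp add: algebra_simps)
  ultimately show ?thesis
    by blast
qed

end
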